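(* Fix an input dimension $d\ge 1$, a hidden size $n\ge 1$ and an activation function $\sigma:\mathbb{R}\to\mathbb{R}$ (applied componentwise). For an integer $R\ge 0$ let $\mathcal{H}_{\mathrm{CPRNN}}(R,n)$ and $\mathcal{H}_{\mathrm{CPBIRNN}}(R,n)$ be the function classes defined in the context. Then: (i) $\mathcal{H}_{\mathrm{CPRNN}}(R,n)\subseteq \mathcal{H}_{\mathrm{CPRNN}}(R+1,n)$ for every $R$; (ii) $\mathcal{H}_{\mathrm{CPRNN}}(R,n)= \mathcal{H}_{\mathrm{CPRNN}}(R+1,n)$ for every $R\ge R_{\max}$. Moreover, assuming $n\le d$: (iii) if $\sigma$ is real analytic and invertible, then $\mathcal{H}_{\mathrm{CPBIRNN}}(R,n)\subsetneq \mathcal{H}_{\mathrm{CPBIRNN}}(R+1,n)$ for every $R< R_{\mathrm{typ\text{-}max}}$; (iv) if $\sigma$ is linear (the identity), then $\mathcal{H}_{\mathrm{CPRNN}}(R,n)\subsetneq \mathcal{H}_{\mathrm{CPRNN}}(R+1,n)$ for every $R< R_{\mathrm{typ\text{-}max}}$.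
   Context: CP decomposition: for matrices $\mathbf{A}\in\mathbb{R}^{d_1\times R},\mathbf{B}\in\mathbb{R}^{d_2\times R},\mathbf{C}\in\mathbb{R}^{d_3\times R}$ with columns $\mathbf a_r,\mathbf b_r,\mathbf c_r$, $[\![\mathbf{A},\mathbf{B},\mathbf{C}]\!]=\sum_{r=1}^R \mathbf a_r\circ\mathbf b_r\circ\mathbf c_r\in\mathbb{R}^{d_1\times d_2\times d_3}$ (outer products). The CP rank of a tensor is the smallest $R$ for which it admits such a decomposition. For a tensor $\mathcal{T}\in\mathbb{R}^{n\times d\times n}$, $h\in\mathbb{R}^n$, $x\in\mathbb{R}^d$, write $(\mathcal{T}\times_1 h\times_2 x)_k=\sum_{i,j}\mathcal{T}_{ijk}h_ix_j$. $R_{\max}$ is the maximum CP rank of tensors in $\mathbb{R}^{n\times d\times n}$; a typical rank is a value $R$ such that the set of tensors in $\mathbb{R}^{n\times d\times n}$ of CP rank $R$ has positive Lebesgue measure, and $R_{\mathrm{typ\text{-}max}}$ is the largest typical rank. A CPRNN of hidden size $n$ and rank $R$ has parameters $\mathbf h^0\in\mathbb{R}^n$, $\mathbf{A}\in\mathbb{R}^{n\times R}$, $\mathbf{B}\in\mathbb{R}^{d\times R}$, $\mathbf{C}\in\mathbb{R}^{n\times R}$, $\mathbf U\in\mathbb{R}^{n\times d}$, $\mathbf V\in\mathbb{R}^{n\times n}$, $\mathbf b\in\mathbb{R}^n$ and activation $\sigma$; on an input sequence $(\mathbf x^1,\dots,\mathbf x^T)$ of vectors in $\mathbb{R}^d$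 (any length $T\ge1$) it computes $\mathbf h^t=\sigma([\![\mathbf{A},\mathbf{B},\mathbf{C}]\!]\times_1\mathbf h^{t-1}\times_2\mathbf x^t+\mathbf V\mathbf h^{t-1}+\mathbf U\mathbf x^t+\mathbf b)$ for $t=1,\dots,T$. A CPBIRNN is a CPRNN with $\mathbf U=0$, $\mathbf V=0$, $\mathbf b=0$. $\mathcal{H}_{\mathrm{CPRNN}}(R,n)$ (resp. $\mathcal{H}_{\mathrm{CPBIRNN}}(R,n)$) is the set of all functions $(\mathbf x^1,\dots,\mathbf x^T)\mapsto(\mathbf h^1,\dots,\mathbf h^T)$ computed by CPRNNs (resp. CPBIRNNs) of rank $R$ and hidden size $n$ with the given activation $\sigma$, as the parameters range over all real values. *)

theory Defs
  imports "HOL-Analysis.Analysis"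
begin

text \<open>Tensors in R^{n x d x n}: entry (i,j,k) is T $ i $ j $ k.
  Dimensions n and d are given by finite index types 'n and 'd.\<close>

type_synonym ('n, 'd) tensor3 = "real ^ 'n ^ 'd ^ 'n"

definition cp_tensor ::
  "nat \<Rightarrow> (nat \<Rightarrow> real ^ 'n) \<Rightarrow> (nat \<Rightarrow> real ^ 'd) \<Rightarrow> (nat \<Rightarrow> real ^ 'n)
     \<Rightarrow> ('n, 'd) tensor3" where
  "cp_tensor R A B C = (\<chi> i j k. \<Sum>r<R. (A r $ i) * (B r $ j) * (C r $ k))"

definition cp_rank :: "('n::finite, 'd::finite) tensor3 \<Rightarrow> nat" where
  "cp_rank T = (LEAST R. \<exists>A B C. T = cp_tensor R A B C)"

definition R_max :: "('n::finite \<times> 'd::finite) itself \<Rightarrow> nat" where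
  "R_max _ = Max (range (cp_rank :: ('n, 'd) tensor3 \<Rightarrow> nat))"

definition typical_rank :: "('n::finite \<times> 'd::finite) itself \<Rightarrow> nat \<Rightarrow> bool" where
  "typical_rank _ R \<longleftrightarrow>
     (let S = {T :: ('n, 'd) tensor3. cp_rank T = R}
      in S \<in> sets lebesgue \<and> emeasure lebesgue S > 0)"

definition R_typ_max :: "('n::finite \<times> 'd::finite) itself \<Rightarrow> nat" where
  "R_typ_max ty = Max {R. typical_rank ty R}"

definition mode12 :: "('n::finite, 'd::finite) tensor3 \<Rightarrow> real ^ 'n \<Rightarrow> real ^ 'd \<Rightarrow> real ^ 'n" where
  "mode12 T h x = (\<chi> k. \<Sum>i\<in>UNIV. \<Sum>j\<in>UNIV. T $ i $ j $ k * h $ i * x $ j)"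

definition act :: "(real \<Rightarrow> real) \<Rightarrow> real ^ 'n \<Rightarrow> real ^ 'n" where
  "act \<sigma> v = (\<chi> k. \<sigma> (v $ k))"

fun cprnn_run ::
  "(real \<Rightarrow> real) \<Rightarrow> ('n::finite, 'd::finite) tensor3 \<Rightarrow> real ^ 'n ^ 'n \<Rightarrow> real ^ 'd ^ 'n
     \<Rightarrow> real ^ 'n \<Rightarrow> real ^ 'n \<Rightarrow> (real ^ 'd) list \<Rightarrow> (real ^ 'n) list" where
  "cprnn_run \<sigma> T V U b h [] = []"
| "cprnn_run \<sigma> T V U b h (x # xs) =
     (let h' = act \<sigma> (mode12 T h x + V *v h + U *v x + b)
      in h' # cprnn_run \<sigma> T V U b h' xs)"

definition H_CPRNN ::
  "(real \<Rightarrow> real) \<Rightarrow> nat \<Rightarrow> ((real ^ 'd::finite) list \<Rightarrow> (real ^ 'n::finite) list) set" where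
  "H_CPRNN \<sigma> R = {f. \<exists>h0 A B C U V b.
      f = (\<lambda>xs. cprnn_run \<sigma> (cp_tensor R A B C) V U b h0 xs)}"

definition H_CPBIRNN ::
  "(real \<Rightarrow> real) \<Rightarrow> nat \<Rightarrow> ((real ^ 'd::finite) list \<Rightarrow> (real ^ 'n::finite) list) set" where
  "H_CPBIRNN \<sigma> R = {f. \<exists>h0 A B C.
      f = (\<lambda>xs. cprnn_run \<sigma> (cp_tensor R A B C) 0 0 0 h0 xs)}"

definition real_analytic :: "(real \<Rightarrow> real) \<Rightarrow> bool" where
  "real_analytic f \<longleftrightarrow> (\<forall>x. \<exists>r>0. \<exists>a::nat \<Rightarrow> real.
      \<forall>y. \<bar>y - x\<bar> < r \<longrightarrow> (\<lambda>k. a k * (y - x) ^ k) sums f y)"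

end

theory Submission
  imports Defs "HOL-Computational_Algebra.Polynomial"
begin

text \<open>Parts (i) and (ii) hold because a CPRNN of rank \<open>R\<close> is the same as a CPRNN whose
  tensor has CP rank at most \<open>R\<close>, and no tensor has rank above \<open>R_max\<close>.

  For (iii) and (iv) the recurrence is inverted on input sequences of length two: the second
  output reveals \<open>T(h, x)\<close> for every state \<open>h\<close> that the first step reaches, so when these
  states span \<open>\<real>\<^sup>n\<close> the function determines \<open>T\<close>, and a tensor of CP rank exactly
  \<open>R + 1\<close> gives a function outside the rank-\<open>R\<close> class. For \<open>\<sigma> = id\<close> a surjective input
  matrix makes every state reachable. In the bilinear case with \<open>h0 = e i0\<close> the reachable
  states are \<open>\<sigma>(T(e i0, x))\<close>; if an \<open>n \<times> n\<close> slice of \<open>x \<mapsto> T(e i0, x)\<close> is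
  nonsingular, both \<open>\<sigma>(0)\<close> and \<open>\<sigma>(e i)\<close> are reachable, and for injective \<open>\<sigma>\<close>
  their difference is a nonzero multiple of \<open>e i\<close>.

  Such a tensor of rank \<open>R + 1\<close> exists for \<open>n \<le> R < R_typ_max\<close>: rank \<open>R_typ_max\<close> occurs
  on a set of positive measure while singular slices form a null set, and a path of rank-one
  updates from a generic multiple of a rank-\<open>n\<close> tensor with identity slice to a tensor of
  rank \<open>R_typ_max\<close> with nonsingular slice crosses rank \<open>R + 1\<close> with nonsingular slices
  throughout. For \<open>R < n\<close> the diagonal tensor \<open>\<Sum>i\<in>I. e i \<otimes> e (g i) \<otimes> e i\<close>
  with \<open>|I| = R + 1\<close> serves instead: its outputs contain \<open>R + 1\<close> independent vectors,
  which a rank-\<open>R\<close> tensor cannot produce.\<close>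

section \<open>CP rank\<close>

definition outer3 :: "real ^ 'n \<Rightarrow> real ^ 'd \<Rightarrow> real ^ 'n \<Rightarrow> ('n, 'd) tensor3" where
  "outer3 a b c = (\<chi> i j k. a $ i * b $ j * c $ k)"

lemma outer3_zero_left [simp]: "outer3 0 b c = 0"
  by (simp add: outer3_def vec_eq_iff)

lemma outer3_uminus_left: "outer3 (- a) b c = - outer3 a b c"
  by (simp add: outer3_def vec_eq_iff)

lemma outer3_scaleR_left: "outer3 (t *\<^sub>R a) b c = t *\<^sub>R outer3 a b c"
  by (simp add: outer3_def vec_eq_iff)

lemma cp_tensor_0 [simp]: "cp_tensor 0 A B C = 0"
  by (simp add: cp_tensor_def vec_eq_iff)

lemma cp_tensor_Suc: "cp_tensor (Suc r) A B C = cp_tensor r A B C + outer3 (A r) (B r) (C r)"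
  by (simp add: cp_tensor_def outer3_def vec_eq_iff)

lemma cp_tensor_eq_sum_outer3: "cp_tensor r A B C = (\<Sum>s<r. outer3 (A s) (B s) (C s))"
  by (induction r) (simp_all add: cp_tensor_Suc)

lemma cp_tensor_cong:
  "(\<And>s. s < r \<Longrightarrow> A s = A' s \<and> B s = B' s \<and> C s = C' s) \<Longrightarrow>
     cp_tensor r A B C = cp_tensor r A' B' C'"
  by (simp add: cp_tensor_def vec_eq_iff)

lemma cp_tensor_add_outer3:
  "cp_tensor r A B C + outer3 a b c = cp_tensor (Suc r) (A(r := a)) (B(r := b)) (C(r := c))"
proof -
  have "cp_tensor r (A(r := a)) (B(r := b)) (C(r := c)) = cp_tensor r A B C"
    by (rule cp_tensor_cong) auto
  then show ?thesis by (simp add: cp_tensor_Suc)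
qed

lemma cp_tensor_pad:
  assumes "r \<le> s"
  shows "cp_tensor s (\<lambda>t. if t < r then A t else 0) B C = cp_tensor r A B C"
proof -
  have "(\<Sum>t<s. outer3 (if t < r then A t else 0) (B t) (C t)) = (\<Sum>t<r. outer3 (A t) (B t) (C t))"
    using assms by (intro sum.mono_neutral_cong_right) auto
  then show ?thesis by (simp add: cp_tensor_eq_sum_outer3)
qed

lemma ex_cp_tensor_sum_outer3:
  "finite F \<Longrightarrow> \<exists>A B C. (\<Sum>p\<in>F. outer3 (a p) (b p) (c p)) = cp_tensor (card F) A B C"
proof (induction F rule: finite_induct)
  case (insert p F)
  then obtain A B C where "(\<Sum>p\<in>F. outer3 (a p) (b p) (c p)) = cp_tensor (card F) A B C"
    by blast
  with insert.hyps show ?case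
    by (auto simp: add.commute cp_tensor_add_outer3)
qed simp

lemma tensor3_eq_sum_outer3:
  fixes T :: "('n::finite, 'd::finite) tensor3"
  shows "T = (\<Sum>p\<in>UNIV. outer3 (axis (fst p) 1) (\<chi> j. T $ fst p $ j $ snd p) (axis (snd p) 1))"
proof -
  have "(\<Sum>p\<in>UNIV. outer3 (axis (fst p) 1) (\<chi> j. T $ fst p $ j $ snd p) (axis (snd p) 1)) $ i $ j $ k
      = (\<Sum>p\<in>UNIV. if p = (i, k) then T $ i $ j $ k else 0)" for i j k
    unfolding sum_component outer3_def axis_def by (rule sum.cong) (auto simp: prod_eq_iff)
  then show ?thesis by (simp add: vec_eq_iff)
qed

lemma ex_cp_tensor_card:
  "\<exists>A B C. (T :: ('n::finite, 'd::finite) tensor3) = cp_tensor CARD('n \<times> 'n) A B C"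
  by (subst tensor3_eq_sum_outer3) (rule ex_cp_tensor_sum_outer3, simp)

lemma cp_rank_le_iff: "cp_rank T \<le> r \<longleftrightarrow> (\<exists>A B C. T = cp_tensor r A B C)"
proof
  have "\<exists>A B C. T = cp_tensor (cp_rank T) A B C"
    unfolding cp_rank_def by (rule LeastI_ex) (use ex_cp_tensor_card in blast)
  then show "\<exists>A B C. T = cp_tensor r A B C" if "cp_rank T \<le> r"
    using cp_tensor_pad[OF that] by metis
qed (auto simp: cp_rank_def intro: Least_le)

lemma obtain_cp_decomposition:
  obtains A B C where "cp_tensor (cp_rank T) A B C = T"
  using cp_rank_le_iff by (metis order_refl)

lemma cp_rank_cp_tensor_le: "cp_rank (cp_tensor r A B C) \<le> r"
  using cp_rank_le_iff by blast

lemma cp_rank_add_outer3_le: "cp_rank (T + outer3 a b c) \<le> Suc (cp_rank T)"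
proof -
  obtain A B C where T: "cp_tensor (cp_rank T) A B C = T"
    by (rule obtain_cp_decomposition)
  have "cp_rank (cp_tensor r A B C + outer3 a b c) \<le> Suc r" for r
    unfolding cp_tensor_add_outer3 by (rule cp_rank_cp_tensor_le)
  from this[of "cp_rank T"] show ?thesis
    by (simp only: T)
qed

lemma cp_rank_sum_outer3_le:
  "finite F \<Longrightarrow> cp_rank (\<Sum>p\<in>F. outer3 (a p) (b p) (c p)) \<le> card F"
  using ex_cp_tensor_sum_outer3 cp_rank_le_iff by blast

lemma cp_rank_le_card: "cp_rank (T :: ('n::finite, 'd::finite) tensor3) \<le> CARD('n \<times> 'n)"
  using ex_cp_tensor_card cp_rank_le_iff by blast

lemma cp_rank_le_R_max: "cp_rank (T :: ('n::finite, 'd::finite) tensor3) \<le> R_max TYPE('n \<times> 'd)"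
proof -
  have "finite (range (cp_rank :: ('n, 'd) tensor3 \<Rightarrow> nat))"
    by (rule finite_subset[of _ "{..CARD('n \<times> 'n)}"]) (use cp_rank_le_card in auto)
  then show ?thesis unfolding R_max_def by (intro Max_ge) auto
qed

lemma mem_H_CPRNN_iff:
  "f \<in> H_CPRNN \<sigma> R \<longleftrightarrow> (\<exists>T h0 U V b. cp_rank T \<le> R \<and> f = (\<lambda>xs. cprnn_run \<sigma> T V U b h0 xs))"
proof
  assume "f \<in> H_CPRNN \<sigma> R"
  then obtain h0 A B C U V b where "f = (\<lambda>xs. cprnn_run \<sigma> (cp_tensor R A B C) V U b h0 xs)"
    unfolding H_CPRNN_def by auto
  moreover have "cp_rank (cp_tensor R A B C) \<le> R"
    by (rule cp_rank_cp_tensor_le)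
  ultimately show "\<exists>T h0 U V b. cp_rank T \<le> R \<and> f = (\<lambda>xs. cprnn_run \<sigma> T V U b h0 xs)"
    by blast
next
  assume "\<exists>T h0 U V b. cp_rank T \<le> R \<and> f = (\<lambda>xs. cprnn_run \<sigma> T V U b h0 xs)"
  then obtain T h0 U V b where "cp_rank T \<le> R" "f = (\<lambda>xs. cprnn_run \<sigma> T V U b h0 xs)"
    by blast
  moreover obtain A B C where "T = cp_tensor R A B C"
    using cp_rank_le_iff \<open>cp_rank T \<le> R\<close> by blast
  ultimately have "f = (\<lambda>xs. cprnn_run \<sigma> (cp_tensor R A B C) V U b h0 xs)"
    by simp
  then show "f \<in> H_CPRNN \<sigma> R"
    unfolding H_CPRNN_def by blast
qed

lemma mem_H_CPBIRNN_iff: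
  "f \<in> H_CPBIRNN \<sigma> R \<longleftrightarrow> (\<exists>T h0. cp_rank T \<le> R \<and> f = (\<lambda>xs. cprnn_run \<sigma> T 0 0 0 h0 xs))"
proof
  assume "f \<in> H_CPBIRNN \<sigma> R"
  then obtain h0 A B C where "f = (\<lambda>xs. cprnn_run \<sigma> (cp_tensor R A B C) 0 0 0 h0 xs)"
    unfolding H_CPBIRNN_def by auto
  moreover have "cp_rank (cp_tensor R A B C) \<le> R"
    by (rule cp_rank_cp_tensor_le)
  ultimately show "\<exists>T h0. cp_rank T \<le> R \<and> f = (\<lambda>xs. cprnn_run \<sigma> T 0 0 0 h0 xs)"
    by blast
next
  assume "\<exists>T h0. cp_rank T \<le> R \<and> f = (\<lambda>xs. cprnn_run \<sigma> T 0 0 0 h0 xs)"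
  then obtain T h0 where "cp_rank T \<le> R" "f = (\<lambda>xs. cprnn_run \<sigma> T 0 0 0 h0 xs)"
    by blast
  moreover obtain A B C where "T = cp_tensor R A B C"
    using cp_rank_le_iff \<open>cp_rank T \<le> R\<close> by blast
  ultimately have "f = (\<lambda>xs. cprnn_run \<sigma> (cp_tensor R A B C) 0 0 0 h0 xs)"
    by simp
  then show "f \<in> H_CPBIRNN \<sigma> R"
    unfolding H_CPBIRNN_def by blast
qed

lemma H_CPRNN_mono:
  assumes "R \<le> S"
  shows "H_CPRNN \<sigma> R \<subseteq> H_CPRNN \<sigma> S"
proof
  fix f
  assume "f \<in> H_CPRNN \<sigma> R"
  then obtain T h0 U V b where "cp_rank T \<le> R" "f = (\<lambda>xs. cprnn_run \<sigma> T V U b h0 xs)"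
    unfolding mem_H_CPRNN_iff by blast
  with assms show "f \<in> H_CPRNN \<sigma> S"
    unfolding mem_H_CPRNN_iff by (intro exI conjI) auto
qed

lemma H_CPBIRNN_mono:
  assumes "R \<le> S"
  shows "H_CPBIRNN \<sigma> R \<subseteq> H_CPBIRNN \<sigma> S"
proof
  fix f
  assume "f \<in> H_CPBIRNN \<sigma> R"
  then obtain T h0 where "cp_rank T \<le> R" "f = (\<lambda>xs. cprnn_run \<sigma> T 0 0 0 h0 xs)"
    unfolding mem_H_CPBIRNN_iff by blast
  with assms show "f \<in> H_CPBIRNN \<sigma> S"
    unfolding mem_H_CPBIRNN_iff by (intro exI conjI) auto
qed

lemma H_CPRNN_Suc_eq:
  assumes "R_max TYPE('n \<times> 'd) \<le> R"
  shows "(H_CPRNN \<sigma> (Suc R) :: ((real ^ 'd::finite) list \<Rightarrow> (real ^ 'n::finite) list) set)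
    = H_CPRNN \<sigma> R"
proof -
  have "cp_rank T \<le> Suc R \<longleftrightarrow> cp_rank T \<le> R" for T :: "('n, 'd) tensor3"
    using cp_rank_le_R_max[of T] assms by linarith
  then show ?thesis
    unfolding set_eq_iff mem_H_CPRNN_iff by simp
qed

section \<open>Measurability of rank level sets and typical ranks\<close>

definition bounded_cp_tensors :: "nat \<Rightarrow> real \<Rightarrow> ('n::finite, 'd::finite) tensor3 set" where
  "bounded_cp_tensors r k = {cp_tensor r A B C | A B C.
     \<forall>s<r. A s \<in> cball 0 k \<and> B s \<in> cball 0 k \<and> C s \<in> cball 0 k}"

lemma bounded_cp_tensors_Suc:
  "bounded_cp_tensors (Suc r) k = (\<lambda>(T, a, b, c). T + outer3 a b c) `
     (bounded_cp_tensors r k \<times> cball 0 k \<times> cball 0 k \<times> cball 0 k)"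
proof (intro equalityI subsetI)
  fix T
  assume "T \<in> bounded_cp_tensors (Suc r) k"
  then obtain A B C where "T = cp_tensor (Suc r) A B C"
    and "\<forall>s<Suc r. A s \<in> cball 0 k \<and> B s \<in> cball 0 k \<and> C s \<in> cball 0 k"
    unfolding bounded_cp_tensors_def by blast
  moreover have "cp_tensor r A B C \<in> bounded_cp_tensors r k"
    using \<open>\<forall>s<Suc r. _\<close> unfolding bounded_cp_tensors_def
    by (intro CollectI exI[of _ A] exI[of _ B] exI[of _ C]) simp
  ultimately show "T \<in> (\<lambda>(T, a, b, c). T + outer3 a b c) `
      (bounded_cp_tensors r k \<times> cball 0 k \<times> cball 0 k \<times> cball 0 k)"
    unfolding cp_tensor_Suc
    by (intro image_eqI[where x = "(cp_tensor r A B C, A r, B r, C r)"]) auto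
next
  fix T
  assume "T \<in> (\<lambda>(T, a, b, c). T + outer3 a b c) `
      (bounded_cp_tensors r k \<times> cball 0 k \<times> cball 0 k \<times> cball 0 k)"
  then obtain A B C a b c where "T = cp_tensor r A B C + outer3 a b c"
    and "\<forall>s<r. A s \<in> cball 0 k \<and> B s \<in> cball 0 k \<and> C s \<in> cball 0 k"
    and "a \<in> cball 0 k" "b \<in> cball 0 k" "c \<in> cball 0 k"
    unfolding bounded_cp_tensors_def by auto
  then show "T \<in> bounded_cp_tensors (Suc r) k"
    unfolding bounded_cp_tensors_def cp_tensor_add_outer3
    by (intro CollectI exI[of _ "A(r := a)"] exI[of _ "B(r := b)"] exI[of _ "C(r := c)"])
       (simp add: less_Suc_eq)
qed

lemma compact_bounded_cp_tensors:
  "compact (bounded_cp_tensors r k :: ('n::finite, 'd::finite) tensor3 set)"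
proof (induction r)
  case 0
  then show ?case by (simp add: bounded_cp_tensors_def)
next
  case (Suc r)
  have "continuous_on UNIV (\<lambda>(T, a, b, c). T + outer3 a b c :: ('n, 'd) tensor3)"
    unfolding outer3_def case_prod_beta
    by (intro continuous_on_vec_lambda continuous_intros)
  then show ?case
    unfolding bounded_cp_tensors_Suc
    by (intro compact_continuous_image compact_Times compact_cball Suc.IH)
       (blast intro: continuous_on_subset)
qed

lemma cp_rank_le_eq_UN_bounded:
  "{T :: ('n::finite, 'd::finite) tensor3. cp_rank T \<le> r} = (\<Union>k::nat. bounded_cp_tensors r (real k))"
proof safe
  fix T :: "('n, 'd) tensor3"
  assume "cp_rank T \<le> r"
  then obtain A B C where T: "T = cp_tensor r A B C"
    using cp_rank_le_iff by blast
  obtain k :: nat where k: "(\<Sum>s<r. norm (A s) + norm (B s) + norm (C s)) \<le> real k"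
    using real_arch_simple by blast
  have "A s \<in> cball 0 (real k) \<and> B s \<in> cball 0 (real k) \<and> C s \<in> cball 0 (real k)"
    if "s < r" for s
  proof -
    have "norm (A s) + norm (B s) + norm (C s) \<le> (\<Sum>s<r. norm (A s) + norm (B s) + norm (C s))"
      using that by (intro member_le_sum) auto
    with k norm_ge_zero[of "A s"] norm_ge_zero[of "B s"] norm_ge_zero[of "C s"] show ?thesis
      unfolding mem_cball_0 by (intro conjI) linarith+
  qed
  then have "T \<in> bounded_cp_tensors r (real k)"
    unfolding bounded_cp_tensors_def T by blast
  then show "T \<in> (\<Union>k::nat. bounded_cp_tensors r (real k))" by blast
qed (auto simp: bounded_cp_tensors_def cp_rank_cp_tensor_le)

lemma sets_lebesgue_cp_rank_le:
  "{T :: ('n::finite, 'd::finite) tensor3. cp_rank T \<le> r} \<in> sets lebesgue"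
proof -
  have "{T. cp_rank T \<le> r} \<in> sets borel"
    unfolding cp_rank_le_eq_UN_bounded
    by (intro sets.countable_UN[of _ UNIV, simplified] subsetI)
       (auto intro!: borel_closed compact_imp_closed compact_bounded_cp_tensors)
  then show ?thesis
    using sets_completionI_sets[of _ lborel] by simp
qed

lemma sets_lebesgue_cp_rank_eq:
  "{T :: ('n::finite, 'd::finite) tensor3. cp_rank T = r} \<in> sets lebesgue"
proof (cases r)
  case 0
  then show ?thesis
    using sets_lebesgue_cp_rank_le[of 0] by simp
next
  case (Suc r')
  then have "{T :: ('n, 'd) tensor3. cp_rank T = r} = {T. cp_rank T \<le> Suc r'} - {T. cp_rank T \<le> r'}"
    by auto
  then show ?thesis
    using sets_lebesgue_cp_rank_le by (metis sets.Diff)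
qed

lemma typical_rank_iff:
  "typical_rank TYPE('n \<times> 'd) r \<longleftrightarrow>
     emeasure lebesgue {T :: ('n::finite, 'd::finite) tensor3. cp_rank T = r} > 0"
  unfolding typical_rank_def Let_def using sets_lebesgue_cp_rank_eq by auto

lemma ex_typical_rank: "\<exists>r. typical_rank TYPE('n::finite \<times> 'd::finite) r"
proof (rule ccontr)
  assume "\<nexists>r. typical_rank TYPE('n \<times> 'd) r"
  then have "{T :: ('n, 'd) tensor3. cp_rank T = r} \<in> null_sets lebesgue" for r
    using sets_lebesgue_cp_rank_eq[of r] by (auto simp: typical_rank_iff null_sets_def)
  then have "(\<Union>r. {T :: ('n, 'd) tensor3. cp_rank T = r}) \<in> null_sets lebesgue"
    by (rule null_sets_UN)
  moreover have "(\<Union>r. {T :: ('n, 'd) tensor3. cp_rank T = r}) = UNIV"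
    by auto
  ultimately have "emeasure lebesgue (UNIV :: ('n, 'd) tensor3 set) = 0"
    by auto
  moreover have "emeasure lebesgue (UNIV :: ('n, 'd) tensor3 set) = \<infinity>"
    by simp
  ultimately show False
    by simp
qed

lemma typical_rank_R_typ_max: "typical_rank TYPE('n::finite \<times> 'd::finite) (R_typ_max TYPE('n \<times> 'd))"
proof -
  have "r \<le> CARD('n \<times> 'n)" if "typical_rank TYPE('n \<times> 'd) r" for r
  proof -
    have "{T :: ('n, 'd) tensor3. cp_rank T = r} \<noteq> {}"
      using that unfolding typical_rank_iff by (intro notI) simp
    then obtain T :: "('n, 'd) tensor3" where "cp_rank T = r"
      by blast
    then show ?thesis
      using cp_rank_le_card[of T] by simp
  qed
  then have "{r. typical_rank TYPE('n \<times> 'd) r} \<subseteq> {..CARD('n \<times> 'n)}"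
    by blast
  then have "finite {r. typical_rank TYPE('n \<times> 'd) r}"
    using finite_subset by blast
  moreover have "{r. typical_rank TYPE('n \<times> 'd) r} \<noteq> {}"
    using ex_typical_rank by blast
  ultimately show ?thesis
    unfolding R_typ_max_def using Max_in by blast
qed

lemma ex_cp_rank_R_typ_max_notin_null:
  assumes "N \<in> null_sets lebesgue"
  shows "\<exists>T :: ('n::finite, 'd::finite) tensor3. cp_rank T = R_typ_max TYPE('n \<times> 'd) \<and> T \<notin> N"
proof (rule ccontr)
  let ?S = "{T :: ('n, 'd) tensor3. cp_rank T = R_typ_max TYPE('n \<times> 'd)}"
  assume "\<not> ?thesis"
  then have "?S \<subseteq> N" by blast
  then have "?S \<in> null_sets lebesgue"
    using assms sets_lebesgue_cp_rank_eq by (blast intro: null_sets_subset)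
  moreover have "typical_rank TYPE('n \<times> 'd) (R_typ_max TYPE('n \<times> 'd))"
    by (rule typical_rank_R_typ_max)
  ultimately show False
    unfolding typical_rank_iff by auto
qed

section \<open>Intermediate ranks\<close>

lemma nat_step_le_Suc_hits:
  fixes f :: "nat \<Rightarrow> nat"
  assumes "f 0 \<le> R" "R < f N" "\<And>i. i < N \<Longrightarrow> f (Suc i) \<le> Suc (f i)"
  shows "\<exists>i\<le>N. f i = Suc R"
proof -
  define i where "i = (LEAST i. R < f i)"
  have "R < f i" "i \<le> N"
    unfolding i_def using assms(2) by (auto intro: LeastI Least_le)
  moreover have "i \<noteq> 0"
    using \<open>R < f i\<close> assms(1) by (intro notI) simp
  moreover have "f (i - 1) \<le> R"
    using not_less_Least[of "i - 1" "\<lambda>i. R < f i"] \<open>i \<noteq> 0\<close> unfolding i_def by simp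
  moreover have "f i \<le> Suc (f (i - 1))"
    using assms(3)[of "i - 1"] \<open>i \<noteq> 0\<close> \<open>i \<le> N\<close> by simp
  ultimately have "f i = Suc R"
    by linarith
  with \<open>i \<le> N\<close> show ?thesis by blast
qed

text \<open>Starting from \<open>\<Sum>s<m. a s \<otimes> b s \<otimes> c s\<close>, first add the \<open>K\<close> terms of a CP
  decomposition, then remove the \<open>m\<close> initial terms one at a time.\<close>

lemma rank_one_path_hits_Suc:
  fixes a c A C :: "nat \<Rightarrow> real ^ 'n::finite" and b B :: "nat \<Rightarrow> real ^ 'd::finite"
  assumes "m \<le> R" and "R < cp_rank (cp_tensor K A B C)"
  shows "\<exists>i\<le>K + m. cp_rank ((\<Sum>s = i - K..<m. outer3 (a s) (b s) (c s)) + cp_tensor (min i K) A B C)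
    = Suc R"
proof (rule nat_step_le_Suc_hits)
  show "cp_rank ((\<Sum>s = 0 - K..<m. outer3 (a s) (b s) (c s)) + cp_tensor (min 0 K) A B C) \<le> R"
    using cp_rank_sum_outer3_le[of "{0..<m}" a b c] assms(1) by simp
  show "R < cp_rank ((\<Sum>s = K + m - K..<m. outer3 (a s) (b s) (c s)) + cp_tensor (min (K + m) K) A B C)"
    using assms(2) by simp
  fix i
  let ?Y = "\<lambda>i. (\<Sum>s = i - K..<m. outer3 (a s) (b s) (c s)) + cp_tensor (min i K) A B C"
  consider "i < K" | "K \<le> i" "i - K < m" | "K \<le> i" "m \<le> i - K"
    by linarith
  then show "cp_rank (?Y (Suc i)) \<le> Suc (cp_rank (?Y i))"
  proof cases
    case 1
    then have "?Y (Suc i) = ?Y i + outer3 (A i) (B i) (C i)"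
      by (simp add: cp_tensor_Suc)
    then show ?thesis
      by (simp add: cp_rank_add_outer3_le)
  next
    case 2
    then have "?Y (Suc i) = ?Y i + outer3 (- a (i - K)) (b (i - K)) (c (i - K))"
      by (simp add: Suc_diff_le sum.atLeast_Suc_lessThan outer3_uminus_left)
    then show ?thesis
      by (simp add: cp_rank_add_outer3_le)
  next
    case 3
    then show ?thesis
      by (simp add: Suc_diff_le)
  qed
qed

lemma ex_cp_rank_eq_Suc:
  fixes T :: "('n::finite, 'd::finite) tensor3"
  assumes "R < cp_rank T"
  shows "\<exists>T' :: ('n, 'd) tensor3. cp_rank T' = Suc R"
proof -
  obtain A B C where T: "cp_tensor (cp_rank T) A B C = T"
    by (rule obtain_cp_decomposition)
  have "\<exists>i\<le>cp_rank T + 0. cp_rank ((\<Sum>s = i - cp_rank T..<0. outer3 (A s) (B s) (C s))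
      + cp_tensor (min i (cp_rank T)) A B C) = Suc R"
    using assms by (intro rank_one_path_hits_Suc) (simp_all add: T)
  then show ?thesis
    by blast
qed

section \<open>Recovering the tensor from two-step runs\<close>

lemma mode12_add_tensor: "mode12 (T + T') h x = mode12 T h x + mode12 T' h x"
  by (simp add: mode12_def vec_eq_iff algebra_simps sum.distrib)

lemma mode12_zero_tensor [simp]: "mode12 0 h x = 0"
  by (simp add: mode12_def vec_eq_iff)

lemma mode12_sum_tensor:
  "finite F \<Longrightarrow> mode12 (\<Sum>p\<in>F. T p) h x = (\<Sum>p\<in>F. mode12 (T p) h x)"
  by (induction F rule: finite_induct) (simp_all add: mode12_add_tensor)

lemma mode12_outer3: "mode12 (outer3 a b c) h x = ((a \<bullet> h) * (b \<bullet> x)) *\<^sub>R c"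
proof -
  have "mode12 (outer3 a b c) h x $ k = ((a \<bullet> h) * (b \<bullet> x)) * c $ k" for k
    unfolding mode12_def outer3_def inner_vec_def inner_real_def vec_lambda_beta sum_product
      sum_distrib_right
    by (simp add: mult_ac sum_distrib_left)
  then show ?thesis
    by (simp add: vec_eq_iff)
qed

lemma mode12_cp_tensor:
  "mode12 (cp_tensor r A B C) h x = (\<Sum>s<r. ((A s \<bullet> h) * (B s \<bullet> x)) *\<^sub>R C s)"
  by (simp add: cp_tensor_eq_sum_outer3 mode12_sum_tensor mode12_outer3)

lemma mode12_cp_tensor_in_span: "mode12 (cp_tensor r A B C) h x \<in> span (C ` {..<r})"
  unfolding mode12_cp_tensor by (intro span_sum span_scale span_base) auto

lemma mode12_diff_left: "mode12 T (h - h') x = mode12 T h x - mode12 T h' x"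
  by (simp add: mode12_def vec_eq_iff algebra_simps sum_subtractf)

lemma mode12_scaleR_left: "mode12 T (t *\<^sub>R h) x = t *\<^sub>R mode12 T h x"
  by (simp add: mode12_def vec_eq_iff sum_distrib_left algebra_simps)

lemma mode12_zero_left [simp]: "mode12 T 0 x = 0"
  by (simp add: mode12_def vec_eq_iff)

lemma mode12_zero_right [simp]: "mode12 T h 0 = 0"
  by (simp add: mode12_def vec_eq_iff)

lemma mode12_axis_axis: "mode12 T (axis i 1) (axis j 1) $ k = T $ i $ j $ k"
proof -
  have "y * (if c then 1 else 0) = (if c then y else 0)" for y :: real and c
    by simp
  then show ?thesis
    unfolding mode12_def axis_def by simp
qed

lemma tensor3_eqI:
  "(\<And>i j. mode12 T (axis i 1) (axis j 1) = mode12 T' (axis i 1) (axis j 1)) \<Longrightarrow> T = T'"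
  by (metis mode12_axis_axis vec_eq_iff)

lemma act_inj: "inj \<sigma> \<Longrightarrow> act \<sigma> v = act \<sigma> w \<Longrightarrow> v = w"
  by (auto simp: act_def vec_eq_iff dest: injD)

lemma act_id [simp]: "act id v = v"
  by (simp add: act_def vec_eq_iff)

lemma cprnn_run_eq_second_step:
  assumes "(\<lambda>xs. cprnn_run \<sigma> T V U b h0 xs) = (\<lambda>xs. cprnn_run \<sigma> T' V' U' b' h0' xs)"
    and h1: "h1 = act \<sigma> (mode12 T h0 x0 + V *v h0 + U *v x0 + b)"
  shows "act \<sigma> (mode12 T h1 x + V *v h1 + U *v x + b)
    = act \<sigma> (mode12 T' h1 x + V' *v h1 + U' *v x + b')"
proof -
  define h1' where "h1' = act \<sigma> (mode12 T' h0' x0 + V' *v h0' + U' *v x0 + b')"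
  have "[h1, act \<sigma> (mode12 T h1 x + V *v h1 + U *v x + b)] = cprnn_run \<sigma> T V U b h0 [x0, x]"
    by (simp add: h1 Let_def)
  also have "\<dots> = cprnn_run \<sigma> T' V' U' b' h0' [x0, x]"
    by (simp add: assms(1))
  also have "\<dots> = [h1', act \<sigma> (mode12 T' h1' x + V' *v h1' + U' *v x + b')]"
    by (simp add: h1'_def Let_def)
  finally show ?thesis
    by auto
qed

lemma cpbirnn_eq_imp_mode12_axis_eq:
  assumes "inj \<sigma>"
    and "(\<lambda>xs. cprnn_run \<sigma> T 0 0 0 h0 xs) = (\<lambda>xs. cprnn_run \<sigma> T' 0 0 0 h0' xs)"
    and "mode12 T h0 x1 = axis i 1"
  shows "mode12 T' (axis i 1) x = mode12 T (axis i 1) x"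
proof -
  have reach: "mode12 T' (act \<sigma> (mode12 T h0 x0)) x = mode12 T (act \<sigma> (mode12 T h0 x0)) x" for x0
    using act_inj[OF assms(1) cprnn_run_eq_second_step[OF assms(2) refl, of x0 x]] by simp
  \<comment> \<open>The first state runs through \<open>act \<sigma> 0\<close> and \<open>act \<sigma> (axis i 1)\<close>, whose difference
     is a nonzero multiple of \<open>axis i 1\<close>; linearity in the state does the rest.\<close>
  have diff: "act \<sigma> (axis i 1) - act \<sigma> 0 = (\<sigma> 1 - \<sigma> 0) *\<^sub>R axis i 1"
    by (simp add: act_def vec_eq_iff axis_def)
  have "(\<sigma> 1 - \<sigma> 0) *\<^sub>R mode12 T' (axis i 1) x
      = mode12 T' (act \<sigma> (axis i 1)) x - mode12 T' (act \<sigma> 0) x"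
    by (simp add: diff mode12_scaleR_left flip: mode12_diff_left)
  also have "\<dots> = mode12 T (act \<sigma> (axis i 1)) x - mode12 T (act \<sigma> 0) x"
    using reach[of x1] reach[of 0] assms(3) by simp
  also have "\<dots> = (\<sigma> 1 - \<sigma> 0) *\<^sub>R mode12 T (axis i 1) x"
    by (simp add: diff mode12_scaleR_left flip: mode12_diff_left)
  finally show ?thesis
    using injD[OF assms(1), of 1 0] by auto
qed

lemma linear_cprnn_eq_imp_tensor_eq:
  assumes "(\<lambda>xs. cprnn_run id T 0 U 0 0 xs) = (\<lambda>xs. cprnn_run id T' V' U' b' h0' xs)"
    and "surj ((*v) U)"
  shows "T' = T"
proof -
  have step: "mode12 T h x + U *v x = mode12 T' h x + V' *v h + U' *v x + b'" for h x
  proof -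
    obtain x0 where "h = U *v x0"
      using assms(2) by blast
    then show ?thesis
      using cprnn_run_eq_second_step[OF assms(1) refl, of x0 x] by simp
  qed
  have "b' = 0"
    using step[of 0 0] by simp
  moreover have "U' *v x = U *v x" for x
    using step[of 0 x] \<open>b' = 0\<close> by simp
  moreover have "V' *v h = 0" for h
    using step[of h 0] \<open>b' = 0\<close> by simp
  ultimately have "mode12 T' h x = mode12 T h x" for h x
    using step[of h x] by simp
  then show ?thesis
    by (intro tensor3_eqI) simp
qed

section \<open>Nonsingular slices\<close>

lemma det_eq_0_imp_kernel:
  fixes A :: "'a::field ^ 'n ^ 'n"
  assumes "det A = 0"
  obtains z where "z \<noteq> 0" "A *v z = 0"
  using assms invertible_det_nz invertible_left_inverse matrix_left_invertible_ker by metis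

lemma det_nonzero_imp_surj:
  fixes A :: "'a::field ^ 'n ^ 'n"
  assumes "det A \<noteq> 0"
  shows "surj ((*v) A)"
  using assms invertible_det_nz invertible_right_inverse matrix_right_invertible_surjective by metis

lemma ex_poly_det_scaleR_add: "\<exists>p. \<forall>t. det (t *\<^sub>R P + Q) = poly p t"
  for P Q :: "real ^ 'n ^ 'n"
proof -
  define p where "p = (\<Sum>\<pi>\<in>{\<pi>. \<pi> permutes (UNIV :: 'n set)}.
    smult (of_int (sign \<pi>)) (\<Prod>i\<in>UNIV. [:Q $ i $ \<pi> i, P $ i $ \<pi> i:]))"
  have "det (t *\<^sub>R P + Q) = poly p t" for t
    unfolding det_def p_def by (simp add: poly_sum poly_prod algebra_simps)
  then show ?thesis by blast
qed

lemma finite_det_scaleR_add_roots: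
  fixes P Q :: "real ^ 'n ^ 'n"
  assumes "det (t0 *\<^sub>R P + Q) \<noteq> 0"
  shows "finite {t. det (t *\<^sub>R P + Q) = 0}"
proof -
  obtain p where p: "\<And>t. det (t *\<^sub>R P + Q) = poly p t"
    using ex_poly_det_scaleR_add by blast
  with assms have "p \<noteq> 0"
    by auto
  then show ?thesis
    unfolding p by (rule poly_roots_finite)
qed

lemma ex_det_scaleR_id_add_nonzero: "\<exists>t. det (t *\<^sub>R mat 1 + Q) \<noteq> 0"
  for Q :: "real ^ 'n ^ 'n"
proof -
  obtain K where "K > 0" and K: "\<And>z. norm (Q *v z) \<le> norm z * K"
    using bounded_linear.pos_bounded[OF matrix_vector_mul_bounded_linear[of Q]] by blast
  have "det ((K + 1) *\<^sub>R mat 1 + Q) \<noteq> 0"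
  proof
    assume "det ((K + 1) *\<^sub>R mat 1 + Q) = 0"
    then obtain z where "z \<noteq> 0" "((K + 1) *\<^sub>R mat 1 + Q) *v z = 0"
      by (rule det_eq_0_imp_kernel)
    then have "Q *v z = - ((K + 1) *\<^sub>R z)"
      by (simp add: matrix_vector_mult_add_rdistrib eq_neg_iff_add_eq_0 add.commute
          flip: scaleR_matrix_vector_assoc)
    then have "(K + 1) * norm z \<le> norm z * K"
      using K[of z] \<open>K > 0\<close> by simp
    with \<open>z \<noteq> 0\<close> show False
      by (simp add: algebra_simps)
  qed
  then show ?thesis by blast
qed

lemma ex_scaleR_add_det_nonzero_all:
  fixes P Q :: "'i \<Rightarrow> real ^ 'n ^ 'n"
  assumes "finite I" and "\<And>i. i \<in> I \<Longrightarrow> \<exists>t. det (t *\<^sub>R P i + Q i) \<noteq> 0"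
  shows "\<exists>t. \<forall>i\<in>I. det (t *\<^sub>R P i + Q i) \<noteq> 0"
proof -
  have "finite (\<Union>i\<in>I. {t. det (t *\<^sub>R P i + Q i) = 0})"
    using assms finite_det_scaleR_add_roots by blast
  then obtain t where "t \<notin> (\<Union>i\<in>I. {t. det (t *\<^sub>R P i + Q i) = 0})"
    using ex_new_if_finite[OF infinite_UNIV_char_0] by blast
  then show ?thesis
    by blast
qed

definition slice_matrix :: "'n \<Rightarrow> ('n \<Rightarrow> 'd) \<Rightarrow> ('n::finite, 'd::finite) tensor3 \<Rightarrow> real ^ 'n ^ 'n" where
  "slice_matrix i0 g T = (\<chi> k j. T $ i0 $ g j $ k)"

lemma slice_matrix_add: "slice_matrix i0 g (T + T') = slice_matrix i0 g T + slice_matrix i0 g T'"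
  by (simp add: slice_matrix_def vec_eq_iff)

lemma slice_matrix_scaleR: "slice_matrix i0 g (t *\<^sub>R T) = t *\<^sub>R slice_matrix i0 g T"
  by (simp add: slice_matrix_def vec_eq_iff)

definition extend_vec :: "('n \<Rightarrow> 'd) \<Rightarrow> real ^ 'n \<Rightarrow> real ^ 'd" where
  "extend_vec g z = (\<chi> j. if j \<in> range g then z $ inv g j else 0)"

lemma extend_vec_nth: "inj g \<Longrightarrow> extend_vec g z $ g j = z $ j"
  by (simp add: extend_vec_def)

lemma mode12_axis_left_nth: "mode12 T (axis i0 1) x $ k = (\<Sum>j\<in>UNIV. T $ i0 $ j $ k * x $ j)"
proof -
  have "(\<Sum>j\<in>UNIV. T $ i $ j $ k * axis i0 1 $ i * x $ j)
      = (if i = i0 then \<Sum>j\<in>UNIV. T $ i0 $ j $ k * x $ j else 0)" for i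
    by (simp add: axis_def)
  then show ?thesis
    by (simp add: mode12_def)
qed

lemma mode12_axis_extend_vec:
  assumes "inj g"
  shows "mode12 T (axis i0 1) (extend_vec g z) = slice_matrix i0 g T *v z"
proof -
  have "mode12 T (axis i0 1) (extend_vec g z) $ k = (slice_matrix i0 g T *v z) $ k" for k
  proof -
    have "mode12 T (axis i0 1) (extend_vec g z) $ k
        = (\<Sum>j'\<in>range g. T $ i0 $ j' $ k * extend_vec g z $ j')"
      unfolding mode12_axis_left_nth by (intro sum.mono_neutral_right) (auto simp: extend_vec_def)
    also have "\<dots> = (\<Sum>j\<in>UNIV. T $ i0 $ g j $ k * z $ j)"
      using assms by (simp add: sum.reindex extend_vec_nth)
    finally show ?thesis
      by (simp add: slice_matrix_def matrix_vector_mult_def)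
  qed
  then show ?thesis
    by (simp add: vec_eq_iff)
qed

lemma tensor3_differentiable_componentwise:
  fixes f :: "'a::real_normed_vector \<Rightarrow> ('n::finite, 'd::finite) tensor3"
  assumes "\<And>i j k. (\<lambda>x. f x $ i $ j $ k) differentiable (at a within S)"
  shows "f differentiable (at a within S)"
  unfolding differentiable_componentwise_within[of f]
proof
  fix b :: "('n, 'd) tensor3"
  assume "b \<in> Basis"
  then obtain i j k where "b = axis i (axis j (axis k 1))"
    by (auto simp: Basis_vec_def)
  then show "(\<lambda>x. f x \<bullet> b) differentiable (at a within S)"
    using assms[of i j k] by (simp add: inner_axis)
qed

lemma tensor3_entry_differentiable: "(\<lambda>T :: ('n::finite, 'd::finite) tensor3. T $ i $ j $ k) differentiable F"
  by (intro bounded_linear_imp_differentiable bounded_linear_compose[OF bounded_linear_vec_nth]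
      bounded_linear_vec_nth)

text \<open>If the slice of \<open>T\<close> is singular, some column \<open>j\<close> is a combination of the others.
  Storing the coefficients in column \<open>j\<close> itself (with \<open>j\<close>-th coefficient \<open>0\<close>) and applying
  \<open>slice_recombine\<close> recovers \<open>T\<close>; so singular slices lie in the smooth image of finitely many
  hyperplanes.\<close>

definition slice_recombine ::
  "'n \<Rightarrow> ('n \<Rightarrow> 'd) \<Rightarrow> 'n \<Rightarrow> ('n::finite, 'd::finite) tensor3 \<Rightarrow> ('n, 'd) tensor3" where
  "slice_recombine i0 g j T = (\<chi> i j' k. if i = i0 \<and> j' = g j
     then (\<Sum>l\<in>UNIV. T $ i0 $ g j $ l * T $ i0 $ g l $ k) else T $ i $ j' $ k)"

lemma slice_recombine_differentiable_on: "slice_recombine i0 g j differentiable_on S"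
  unfolding differentiable_on_def
proof
  fix T
  show "slice_recombine i0 g j differentiable (at T within S)"
  proof (rule tensor3_differentiable_componentwise)
    fix i j' k
    show "(\<lambda>T. slice_recombine i0 g j T $ i $ j' $ k) differentiable (at T within S)"
      by (cases "i = i0 \<and> j' = g j")
         (auto simp: slice_recombine_def intro!: differentiable_sum differentiable_mult
           tensor3_entry_differentiable)
  qed
qed

lemma singular_slice_subset_recombine:
  assumes "inj g" and "det (slice_matrix i0 g T) = 0"
  shows "T \<in> (\<Union>j. slice_recombine i0 g j ` {T. T $ i0 $ g j $ j = 0})"
proof -
  obtain z where "z \<noteq> 0" and kernel: "slice_matrix i0 g T *v z = 0"
    using assms(2) by (rule det_eq_0_imp_kernel)
  then obtain j where "z $ j \<noteq> 0"
    by (auto simp: vec_eq_iff)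
  define c where "c l = (if l = j then 0 else - z $ l / z $ j)" for l
  define T0 where "T0 = (\<chi> i j' k. if i = i0 \<and> j' = g j then c k else T $ i $ j' $ k)"
  have "(\<Sum>l\<in>UNIV. c l * T $ i0 $ g l $ k) = T $ i0 $ g j $ k" for k
  proof -
    have "(\<Sum>l\<in>UNIV. T $ i0 $ g l $ k * z $ l) = 0"
      using kernel by (simp add: slice_matrix_def vec_eq_iff matrix_vector_mult_def)
    moreover have "c l * T $ i0 $ g l $ k
        = (if l = j then T $ i0 $ g l $ k else 0) - T $ i0 $ g l $ k * z $ l / z $ j" for l
      using \<open>z $ j \<noteq> 0\<close> by (simp add: c_def field_simps)
    ultimately show ?thesis
      by (simp add: sum_subtractf sum_divide_distrib[symmetric])
  qed
  moreover have "(\<Sum>l\<in>UNIV. T0 $ i0 $ g j $ l * T0 $ i0 $ g l $ k)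
      = (\<Sum>l\<in>UNIV. c l * T $ i0 $ g l $ k)" for k
    by (rule sum.cong) (auto simp: T0_def c_def dest: injD[OF assms(1)])
  ultimately have "slice_recombine i0 g j T0 = T"
    by (simp add: slice_recombine_def T0_def vec_eq_iff)
  moreover have "T0 $ i0 $ g j $ j = 0"
    by (simp add: T0_def c_def)
  ultimately show ?thesis
    by blast
qed

lemma negligible_singular_slice:
  assumes "inj g"
  shows "negligible {T :: ('n::finite, 'd::finite) tensor3. det (slice_matrix i0 g T) = 0}"
proof (rule negligible_subset)
  have "negligible {T :: ('n, 'd) tensor3. T $ i0 $ g j $ j = 0}" for j
  proof -
    have "{T :: ('n, 'd) tensor3. T $ i0 $ g j $ j = 0} = {T. axis i0 (axis (g j) (axis j 1)) \<bullet> T = 0}"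
      by (simp add: inner_axis')
    then show ?thesis
      by (simp add: negligible_hyperplane axis_eq_axis)
  qed
  then show "negligible (\<Union>j. slice_recombine i0 g j ` {T :: ('n, 'd) tensor3. T $ i0 $ g j $ j = 0})"
    by (intro negligible_Union finite_imageI finite_UNIV)
       (auto intro!: negligible_differentiable_image_negligible[OF order_refl]
         slice_recombine_differentiable_on)
qed (use singular_slice_subset_recombine[OF assms] in blast)

lemma obtain_sum_outer3_slice_eq_mat1:
  fixes g :: "'n::finite \<Rightarrow> 'd::finite"
  assumes "inj g"
  obtains a b c where "slice_matrix i0 g (\<Sum>s<CARD('n). outer3 (a s) (b s) (c s)) = mat 1"
proof -
  obtain e where e: "bij_betw e {..<CARD('n)} (UNIV :: 'n set)"
    using ex_bij_betw_nat_finite[of "UNIV :: 'n set"] by (auto simp: lessThan_atLeast0)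
  let ?D = "\<Sum>s<CARD('n). outer3 (axis i0 1) (axis (g (e s)) 1) (axis (e s) (1::real))"
  have "slice_matrix i0 g ?D $ k $ j = mat 1 $ k $ j" for k j
  proof -
    have "slice_matrix i0 g ?D $ k $ j = (\<Sum>s<CARD('n). (\<lambda>i. if i = j \<and> i = k then 1 else 0) (e s))"
      unfolding slice_matrix_def outer3_def
      by (auto simp: sum_component axis_def dest: injD[OF assms] intro!: sum.cong)
    also have "\<dots> = (\<Sum>i\<in>UNIV. if i = j \<and> i = k then 1 else 0)"
      by (rule sum.reindex_bij_betw[OF e])
    also have "\<dots> = mat 1 $ k $ j"
      by (cases "j = k") (auto simp: mat_def intro!: sum.neutral)
    finally show ?thesis .
  qed
  then have "slice_matrix i0 g ?D = mat 1"
    by (simp add: vec_eq_iff)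
  then show ?thesis
    by (rule that)
qed

section \<open>Strict inclusions\<close>

lemma mode12_diagonal_axis:
  assumes "inj g" and "finite I" and "i \<in> I"
  shows "mode12 (\<Sum>i'\<in>I. outer3 (axis i' 1) (axis (g i') 1) (axis i' 1)) h (axis (g i) 1)
    = (h $ i) *\<^sub>R axis i 1"
proof -
  have "mode12 (\<Sum>i'\<in>I. outer3 (axis i' 1) (axis (g i') 1) (axis i' 1)) h (axis (g i) 1)
      = (\<Sum>i'\<in>I. ((axis i' 1 \<bullet> h) * (axis (g i') 1 \<bullet> axis (g i) (1::real))) *\<^sub>R axis i' (1::real))"
    using assms(2) by (simp add: mode12_sum_tensor mode12_outer3)
  also have "\<dots> = (\<Sum>i'\<in>I. if i' = i then (axis i 1 \<bullet> h) *\<^sub>R axis i 1 else 0)"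
    using assms(1) by (intro sum.cong refl) (auto simp: inner_axis_axis dest: injD)
  finally show ?thesis
    using assms(2,3) by (simp add: inner_axis')
qed

lemma independent_subset_span_card_le:
  fixes C :: "nat \<Rightarrow> 'a::real_vector"
  assumes "independent S" and "S \<subseteq> span (C ` {..<r})"
  shows "card S \<le> r"
proof -
  have "card S \<le> card (C ` {..<r})"
    using independent_span_bound[OF _ assms] by simp
  also have "\<dots> \<le> r"
    using card_image_le[of "{..<r}" C] by simp
  finally show ?thesis .
qed

lemma H_CPBIRNN_Suc_not_subset_small:
  fixes g :: "'n::finite \<Rightarrow> 'd::finite"
  assumes "inj g" and "inj \<sigma>" and "Suc R \<le> CARD('n)"
  shows "\<not> H_CPBIRNN \<sigma> (Suc R) \<subseteq> (H_CPBIRNN \<sigma> R :: ((real ^ 'd) list \<Rightarrow> (real ^ 'n) list) set)"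
proof
  obtain I :: "'n set" where I: "card I = Suc R"
    using obtain_subset_with_card_n[OF assms(3)] by blast
  define T :: "('n, 'd) tensor3" where "T = (\<Sum>i\<in>I. outer3 (axis i 1) (axis (g i) 1) (axis i 1))"
  define f where "f = (\<lambda>xs. cprnn_run \<sigma> T 0 0 0 (vec 1) xs)"
  have "cp_rank T \<le> Suc R"
    using cp_rank_sum_outer3_le[of I] I unfolding T_def by simp
  then have "f \<in> H_CPBIRNN \<sigma> (Suc R)"
    unfolding f_def mem_H_CPBIRNN_iff by blast
  moreover assume "H_CPBIRNN \<sigma> (Suc R) \<subseteq> (H_CPBIRNN \<sigma> R :: ((real ^ 'd) list \<Rightarrow> (real ^ 'n) list) set)"
  ultimately have "f \<in> H_CPBIRNN \<sigma> R"
    by blast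
  then obtain h0 A B C where f: "f = (\<lambda>xs. cprnn_run \<sigma> (cp_tensor R A B C) 0 0 0 h0 xs)"
    unfolding H_CPBIRNN_def by blast
  \<comment> \<open>The \<open>R + 1\<close> independent vectors \<open>axis i 1\<close>, \<open>i \<in> I\<close>, are outputs of the rank-\<open>R\<close>
     tensor and hence lie in the span of its \<open>R\<close> factor vectors \<open>C\<close>.\<close>
  have "axis i 1 \<in> span (C ` {..<R})" if "i \<in> I" for i
  proof -
    have T_axis: "mode12 T h (axis (g i) 1) = (h $ i) *\<^sub>R axis i 1" for h
      unfolding T_def using assms(1) that I by (intro mode12_diagonal_axis) (auto intro: card_ge_0_finite)
    have "mode12 (cp_tensor R A B C) (axis i 1) (axis (g i) 1) = mode12 T (axis i 1) (axis (g i) 1)"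
      using assms(2) f T_axis[of "vec 1"] unfolding f_def
      by (intro cpbirnn_eq_imp_mode12_axis_eq) simp_all
    also have "\<dots> = axis i 1"
      using T_axis by simp
    finally show ?thesis
      using mode12_cp_tensor_in_span by metis
  qed
  then have "card ((\<lambda>i. axis i (1::real)) ` I) \<le> R"
    by (intro independent_subset_span_card_le independent_mono[OF independent_Basis]) auto
  then show False
    using I card_image[of "\<lambda>i. axis i (1::real)" I] by (simp add: inj_on_def axis_eq_axis)
qed

lemma ex_cp_rank_Suc_nonsingular_slice:
  fixes g :: "'n::finite \<Rightarrow> 'd::finite"
  assumes "inj g" and "CARD('n) \<le> R" and "R < R_typ_max TYPE('n \<times> 'd)"
  shows "\<exists>T :: ('n, 'd) tensor3. cp_rank T = Suc R \<and> det (slice_matrix i0 g T) \<noteq> 0"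
proof -
  let ?K = "R_typ_max TYPE('n \<times> 'd)" and ?n = "CARD('n)"
  obtain Ts :: "('n, 'd) tensor3" where Ts: "cp_rank Ts = ?K" "det (slice_matrix i0 g Ts) \<noteq> 0"
    using ex_cp_rank_R_typ_max_notin_null negligible_singular_slice[OF assms(1)]
    unfolding negligible_iff_null_sets by blast
  obtain A B C where Ts_cp: "cp_tensor ?K A B C = Ts"
    using obtain_cp_decomposition[of Ts] Ts(1) by metis
  obtain a b c where abc: "slice_matrix i0 g (\<Sum>s<?n. outer3 (a s) (b s) (c s)) = mat 1"
    by (rule obtain_sum_outer3_slice_eq_mat1[OF assms(1)])
  \<comment> \<open>Along the path of \<open>rank_one_path_hits_Suc\<close>, started from \<open>l\<close> times a tensor with identity
     slice, the slices are affine in \<open>l\<close>; a generic \<open>l\<close> keeps all of them nonsingular.\<close>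
  define P where "P i = slice_matrix i0 g (\<Sum>s = i - ?K..<?n. outer3 (a s) (b s) (c s))" for i
  define Q where "Q i = slice_matrix i0 g (cp_tensor (min i ?K) A B C)" for i
  have "\<exists>l. \<forall>i\<in>{..?K + ?n}. det (l *\<^sub>R P i + Q i) \<noteq> 0"
  proof (rule ex_scaleR_add_det_nonzero_all)
    fix i
    show "\<exists>l. det (l *\<^sub>R P i + Q i) \<noteq> 0"
    proof (cases "i \<le> ?K")
      case True
      then show ?thesis
        using ex_det_scaleR_id_add_nonzero[of "Q i"] abc by (simp add: P_def lessThan_atLeast0)
    next
      case False
      then show ?thesis
        using Ts(2) by (intro exI[of _ 0]) (simp add: Q_def Ts_cp)
    qed
  qed simp
  then obtain l where l: "\<And>i. i \<le> ?K + ?n \<Longrightarrow> det (l *\<^sub>R P i + Q i) \<noteq> 0"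
    by auto
  have "R < cp_rank (cp_tensor ?K A B C)"
    using assms(3) Ts(1) Ts_cp by simp
  then obtain i where "i \<le> ?K + ?n"
    and i: "cp_rank ((\<Sum>s = i - ?K..<?n. outer3 (l *\<^sub>R a s) (b s) (c s)) + cp_tensor (min i ?K) A B C)
      = Suc R"
    using rank_one_path_hits_Suc[OF assms(2), of ?K A B C "\<lambda>s. l *\<^sub>R a s" b c] by blast
  define T where "T = (\<Sum>s = i - ?K..<?n. outer3 (l *\<^sub>R a s) (b s) (c s)) + cp_tensor (min i ?K) A B C"
  have "slice_matrix i0 g T = l *\<^sub>R P i + Q i"
    unfolding T_def P_def Q_def outer3_scaleR_left
    by (simp only: slice_matrix_add slice_matrix_scaleR flip: scaleR_sum_right)
  then have "det (slice_matrix i0 g T) \<noteq> 0"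
    using l[OF \<open>i \<le> ?K + ?n\<close>] by simp
  with i show ?thesis
    unfolding T_def by blast
qed

lemma H_CPBIRNN_Suc_not_subset_large:
  fixes g :: "'n::finite \<Rightarrow> 'd::finite"
  assumes "inj g" and "inj \<sigma>" and "CARD('n) \<le> R" and "R < R_typ_max TYPE('n \<times> 'd)"
  shows "\<not> H_CPBIRNN \<sigma> (Suc R) \<subseteq> (H_CPBIRNN \<sigma> R :: ((real ^ 'd) list \<Rightarrow> (real ^ 'n) list) set)"
proof
  fix i0 :: 'n
  obtain T :: "('n, 'd) tensor3" where T: "cp_rank T = Suc R" "det (slice_matrix i0 g T) \<noteq> 0"
    using ex_cp_rank_Suc_nonsingular_slice[OF assms(1,3,4)] by blast
  define f where "f = (\<lambda>xs. cprnn_run \<sigma> T 0 0 0 (axis i0 1) xs)"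
  have "f \<in> H_CPBIRNN \<sigma> (Suc R)"
    unfolding f_def mem_H_CPBIRNN_iff using T(1)
    by (intro exI[of _ T] exI[of _ "axis i0 1"]) simp
  moreover assume "H_CPBIRNN \<sigma> (Suc R) \<subseteq> (H_CPBIRNN \<sigma> R :: ((real ^ 'd) list \<Rightarrow> (real ^ 'n) list) set)"
  ultimately have "f \<in> H_CPBIRNN \<sigma> R"
    by blast
  then obtain T' h0' where "cp_rank T' \<le> R" and f: "f = (\<lambda>xs. cprnn_run \<sigma> T' 0 0 0 h0' xs)"
    unfolding mem_H_CPBIRNN_iff by blast
  \<comment> \<open>A nonsingular slice lets the first step reach every \<open>axis i 1\<close>, which determines \<open>T\<close>.\<close>
  have "mode12 T' (axis i 1) x = mode12 T (axis i 1) x" for i x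
  proof -
    obtain z where "slice_matrix i0 g T *v z = axis i 1"
      using det_nonzero_imp_surj[OF T(2)] by (metis surjD)
    then have "mode12 T (axis i0 1) (extend_vec g z) = axis i 1"
      by (simp add: mode12_axis_extend_vec[OF assms(1)])
    then show ?thesis
      using assms(2) f unfolding f_def by (intro cpbirnn_eq_imp_mode12_axis_eq) simp_all
  qed
  then have "T' = T"
    by (intro tensor3_eqI)
  with T(1) \<open>cp_rank T' \<le> R\<close> show False
    by simp
qed

lemma H_CPBIRNN_strict_mono:
  assumes "CARD('n) \<le> CARD('d)" and "inj \<sigma>" and "R < R_typ_max TYPE('n \<times> 'd)"
  shows "(H_CPBIRNN \<sigma> R :: ((real ^ 'd::finite) list \<Rightarrow> (real ^ 'n::finite) list) set)
    \<subset> H_CPBIRNN \<sigma> (Suc R)"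
proof -
  obtain g :: "'n \<Rightarrow> 'd" where g: "inj g"
    using card_le_inj[of "UNIV :: 'n set" "UNIV :: 'd set"] assms(1) by auto
  have "\<not> H_CPBIRNN \<sigma> (Suc R) \<subseteq> (H_CPBIRNN \<sigma> R :: ((real ^ 'd) list \<Rightarrow> (real ^ 'n) list) set)"
  proof (cases "Suc R \<le> CARD('n)")
    case True
    then show ?thesis
      by (rule H_CPBIRNN_Suc_not_subset_small[OF g assms(2)])
  next
    case False
    then show ?thesis
      using H_CPBIRNN_Suc_not_subset_large[OF g assms(2) _ assms(3)] by simp
  qed
  moreover have "H_CPBIRNN \<sigma> R \<subseteq> H_CPBIRNN \<sigma> (Suc R)"
    by (rule H_CPBIRNN_mono) simp
  ultimately show ?thesis
    by blast
qed

lemma surj_selection_matrix: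
  assumes "inj g"
  shows "surj ((*v) (\<chi> k j. if j = g k then (1::real) else 0))"
proof -
  have "(if c then 1 else 0) * u = (if c then u else 0)" for c and u :: real
    by simp
  then have "(\<chi> k j. if j = g k then (1::real) else 0) *v extend_vec g y = y" for y
    using assms by (simp add: matrix_vector_mult_def vec_eq_iff extend_vec_nth)
  then show ?thesis
    by (metis surjI)
qed

lemma H_CPRNN_id_strict_mono:
  assumes "CARD('n) \<le> CARD('d)" and "R < R_typ_max TYPE('n \<times> 'd)"
  shows "(H_CPRNN id R :: ((real ^ 'd::finite) list \<Rightarrow> (real ^ 'n::finite) list) set)
    \<subset> H_CPRNN id (Suc R)"
proof -
  obtain g :: "'n \<Rightarrow> 'd" where g: "inj g"
    using card_le_inj[of "UNIV :: 'n set" "UNIV :: 'd set"] assms(1) by auto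
  obtain T0 :: "('n, 'd) tensor3" where "cp_rank T0 = R_typ_max TYPE('n \<times> 'd)"
    using ex_cp_rank_R_typ_max_notin_null[of "{}"] by auto
  then obtain T :: "('n, 'd) tensor3" where T: "cp_rank T = Suc R"
    using ex_cp_rank_eq_Suc assms(2) by metis
  define U :: "real ^ 'd ^ 'n" where "U = (\<chi> k j. if j = g k then 1 else 0)"
  define f where "f = (\<lambda>xs. cprnn_run id T 0 U 0 0 xs)"
  have "f \<in> H_CPRNN id (Suc R)"
    unfolding f_def mem_H_CPRNN_iff using T
    by (intro exI[of _ T] exI[of _ 0] exI[of _ U] exI[of _ 0] exI[of _ 0]) simp
  moreover have "f \<notin> H_CPRNN id R"
  proof
    assume "f \<in> H_CPRNN id R"
    then obtain T' h0' U' V' b' where "cp_rank T' \<le> R"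
      and "f = (\<lambda>xs. cprnn_run id T' V' U' b' h0' xs)"
      unfolding mem_H_CPRNN_iff by blast
    with surj_selection_matrix[OF g] have "T' = T"
      unfolding f_def U_def by (intro linear_cprnn_eq_imp_tensor_eq) simp_all
    with T \<open>cp_rank T' \<le> R\<close> show False
      by simp
  qed
  moreover have "H_CPRNN id R \<subseteq> H_CPRNN id (Suc R)"
    by (rule H_CPRNN_mono) simp
  ultimately show ?thesis
    by blast
qed

theorem theorem1:
  fixes \<sigma> :: "real \<Rightarrow> real"
  shows "(\<forall>R. (H_CPRNN \<sigma> R :: ((real ^ 'd::finite) list \<Rightarrow> (real ^ 'n::finite) list) set)
                \<subseteq> H_CPRNN \<sigma> (Suc R))
    \<and> (\<forall>R \<ge> R_max TYPE('n \<times> 'd).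
          (H_CPRNN \<sigma> R :: ((real ^ 'd) list \<Rightarrow> (real ^ 'n) list) set) = H_CPRNN \<sigma> (Suc R))
    \<and> (CARD('n) \<le> CARD('d) \<longrightarrow> real_analytic \<sigma> \<longrightarrow> inj \<sigma> \<longrightarrow>
          (\<forall>R < R_typ_max TYPE('n \<times> 'd).
             (H_CPBIRNN \<sigma> R :: ((real ^ 'd) list \<Rightarrow> (real ^ 'n) list) set) \<subset> H_CPBIRNN \<sigma> (Suc R)))
    \<and> (CARD('n) \<le> CARD('d) \<longrightarrow> \<sigma> = id \<longrightarrow>
          (\<forall>R < R_typ_max TYPE('n \<times> 'd).
             (H_CPRNN \<sigma> R :: ((real ^ 'd) list \<Rightarrow> (real ^ 'n) list) set) \<subset> H_CPRNN \<sigma> (Suc R)))"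
proof (intro conjI allI impI)
  show "(H_CPRNN \<sigma> R :: ((real ^ 'd) list \<Rightarrow> (real ^ 'n) list) set) \<subseteq> H_CPRNN \<sigma> (Suc R)" for R
    by (rule H_CPRNN_mono) simp
  show "(H_CPRNN \<sigma> R :: ((real ^ 'd) list \<Rightarrow> (real ^ 'n) list) set) = H_CPRNN \<sigma> (Suc R)"
    if "R_max TYPE('n \<times> 'd) \<le> R" for R
    using H_CPRNN_Suc_eq[OF that] by simp
  show "(H_CPBIRNN \<sigma> R :: ((real ^ 'd) list \<Rightarrow> (real ^ 'n) list) set) \<subset> H_CPBIRNN \<sigma> (Suc R)"
    if "CARD('n) \<le> CARD('d)" and "inj \<sigma>" and "R < R_typ_max TYPE('n \<times> 'd)" for R
    using that by (rule H_CPBIRNN_strict_mono)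
  show "(H_CPRNN \<sigma> R :: ((real ^ 'd) list \<Rightarrow> (real ^ 'n) list) set) \<subset> H_CPRNN \<sigma> (Suc R)"
    if "CARD('n) \<le> CARD('d)" and "\<sigma> = id" and "R < R_typ_max TYPE('n \<times> 'd)" for R
    using H_CPRNN_id_strict_mono[OF that(1,3)] that(2) by simp
qed

end
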